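(* Let $p > 2$ be a prime and let $z \in \mathbb{Z}/p\mathbb{Z}$. Then there exist $x, y \in \mathbb{Z}/p\mathbb{Z}$ such that $x^2 + y^2 + z^2 - xyz \equiv 0 \pmod p$ if and only if either $z \notin \{2, -2\}$ or $-1$ is a quadratic residue modulo $p$. *)

theory Defs
  imports "HOL-Number_Theory.Number_Theory"
begin

end

theory Submission
  imports Defs
begin

text \<open>Completing the square in \<open>x\<close>,
  \<open>4 (x\<^sup>2 + y\<^sup>2 + z\<^sup>2 - x y z) = (2 x - y z)\<^sup>2 - ((z\<^sup>2 - 4) y\<^sup>2 - 4 z\<^sup>2)\<close>,
  so modulo an odd \<open>p\<close> there is a solution iff the discriminant \<open>(z\<^sup>2 - 4) y\<^sup>2 - 4 z\<^sup>2\<close>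
  is a square for some \<open>y\<close>. If \<open>z \<equiv> \<plusminus>2\<close> the discriminant is \<open>-16\<close>, a square iff \<open>-1\<close> is.
  Otherwise \<open>z\<^sup>2 - 4\<close> is a unit, and the \<open>(p + 1) / 2\<close> distinct values of
  \<open>(z\<^sup>2 - 4) y\<^sup>2 - 4 z\<^sup>2\<close> and the \<open>(p + 1) / 2\<close> squares cannot be disjoint.\<close>

lemma markov_times_4:
  fixes x y z :: "'a::comm_ring_1"
  shows "4 * (x^2 + y^2 + z^2 - x*y*z) = (2*x - y*z)^2 - ((z^2 - 4) * y^2 - 4 * z^2)"
  by (simp add: power2_eq_square algebra_simps)

lemma coprime_4_if_odd:
  fixes m :: int
  assumes "odd m"
  shows "coprime 4 m"
  using assms coprime_power_left_iff[of 2 2 m] by simp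

lemma markov_cong_solvable_iff_square:
  fixes m y z :: int
  assumes "odd m"
  shows "(\<exists>x. [x^2 + y^2 + z^2 - x*y*z = 0] (mod m))
    \<longleftrightarrow> (\<exists>b. [b^2 = (z^2 - 4) * y^2 - 4 * z^2] (mod m))"
proof
  assume "\<exists>x. [x^2 + y^2 + z^2 - x*y*z = 0] (mod m)"
  then obtain x where "[x^2 + y^2 + z^2 - x*y*z = 0] (mod m)" ..
  then have "[4 * (x^2 + y^2 + z^2 - x*y*z) = 4 * 0] (mod m)"
    by (rule cong_scalar_left)
  then have "[(2*x - y*z)^2 - ((z^2 - 4) * y^2 - 4 * z^2) = 0] (mod m)"
    by (simp only: markov_times_4) simp
  then show "\<exists>b. [b^2 = (z^2 - 4) * y^2 - 4 * z^2] (mod m)"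
    by (auto simp: cong_iff_dvd_diff)
next
  assume "\<exists>b. [b^2 = (z^2 - 4) * y^2 - 4 * z^2] (mod m)"
  then obtain b where b: "[b^2 = (z^2 - 4) * y^2 - 4 * z^2] (mod m)" ..
  have "coprime 2 m"
    using assms by simp
  then obtain h where h: "[2 * h = 1] (mod m)"
    using cong_solve_coprime_int by blast
  define x where "x = (b + y*z) * h"
  have "[2*x - y*z = (b + y*z) * 1 - y*z] (mod m)"
    unfolding x_def using h
    by (metis cong_diff cong_refl cong_scalar_left mult.left_commute)
  then have "[(2*x - y*z)^2 = b^2] (mod m)"
    by (simp add: cong_pow)
  then have "[(2*x - y*z)^2 - ((z^2 - 4) * y^2 - 4 * z^2) = b^2 - ((z^2 - 4) * y^2 - 4 * z^2)] (mod m)"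
    by (rule cong_diff) (rule cong_refl)
  also have "[b^2 - ((z^2 - 4) * y^2 - 4 * z^2) = 0] (mod m)"
    using b by (simp add: cong_iff_dvd_diff)
  finally have "[4 * (x^2 + y^2 + z^2 - x*y*z) = 4 * 0] (mod m)"
    by (simp only: markov_times_4 mult_zero_right)
  then have "[x^2 + y^2 + z^2 - x*y*z = 0] (mod m)"
    using cong_mult_lcancel coprime_4_if_odd[OF assms] by blast
  then show "\<exists>x. [x^2 + y^2 + z^2 - x*y*z = 0] (mod m)" ..
qed

lemma QuadRes_minus_one_if_sum_squares_cong_0:
  fixes m s k :: int
  assumes "coprime k m" and "[s^2 + k^2 = 0] (mod m)"
  shows "QuadRes m (-1)"
proof -
  obtain k' where k': "[k * k' = 1] (mod m)"
    using cong_solve_coprime_int assms(1) by blast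
  have "(s * k')^2 = (s^2 + k^2) * k'^2 - (k * k')^2"
    by (simp add: power2_eq_square algebra_simps)
  also have "[\<dots> = 0 * k'^2 - 1^2] (mod m)"
    using assms(2) k' by (intro cong_diff cong_mult cong_pow cong_refl)
  finally show ?thesis
    unfolding QuadRes_def by auto
qed

lemma square_cong_imp_eq:
  fixes p a b :: int
  assumes "prime p" and "0 \<le> a" "0 \<le> b" "2 * a < p" "2 * b < p"
    and "[a^2 = b^2] (mod p)"
  shows "a = b"
proof -
  have "p dvd (a - b) * (a + b)"
    using assms(6) by (simp add: cong_iff_dvd_diff power2_eq_square algebra_simps)
  then have "p dvd a - b \<or> p dvd a + b"
    using assms(1) by (simp add: prime_dvd_mult_iff)
  then show ?thesis
  proof
    assume "p dvd a - b"
    then show ?thesis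
      using dvd_imp_le_int[of "a - b" p] assms(2-5) by fastforce
  next
    assume "p dvd a + b"
    then show ?thesis
      using dvd_imp_le_int[of "a + b" p] assms(2-5) by fastforce
  qed
qed

lemma exists_cong_square_eq_quadratic:
  fixes p c d :: int
  assumes "prime p" and "odd p" and "\<not> p dvd c"
  shows "\<exists>a b. [c * a^2 + d = b^2] (mod p)"
proof (rule ccontr)
  assume none: "\<not> ?thesis"
  define S where "S = {0..p div 2}"
  define f where "f a = (c * a^2 + d) mod p" for a
  define g where "g b = b^2 mod p" for b
  have half: "0 \<le> a \<and> 2 * a < p" if "a \<in> S" for a
    using that odd_two_times_div_two_succ[OF assms(2)] unfolding S_def by auto
  have "coprime c p"
    using prime_imp_coprime[OF assms(1,3)] by (simp add: ac_simps)
  then have "inj_on f S"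
  proof (intro inj_onI square_cong_imp_eq[OF assms(1)])
    fix a b
    assume "f a = f b"
    then have "[c * a^2 + d = c * b^2 + d] (mod p)"
      unfolding f_def cong_def .
    then show "[a^2 = b^2] (mod p)"
      using \<open>coprime c p\<close> by (simp add: cong_add_rcancel cong_mult_lcancel)
  qed (use half in auto)
  moreover have "inj_on g S"
    unfolding g_def
    by (intro inj_onI square_cong_imp_eq[OF assms(1)]) (auto simp: half cong_def)
  moreover have "f ` S \<inter> g ` S = {}"
    using none unfolding f_def g_def by (auto simp: cong_def)
  ultimately have "card (f ` S \<union> g ` S) = card S + card S"
    by (simp add: S_def card_Un_disjoint card_image)
  moreover have "card (f ` S \<union> g ` S) \<le> card {0..<p}"
    unfolding f_def g_def using assms(1) prime_gt_0_int by (intro card_mono) auto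
  moreover have "card S = nat (p div 2 + 1)"
    unfolding S_def by simp
  ultimately show False
    using odd_two_times_div_two_succ[OF assms(2)] prime_gt_0_int[OF assms(1)] by (simp; arith)
qed

lemma prime_cong_square_4_iff:
  fixes p z :: int
  assumes "prime p"
  shows "[z^2 = 4] (mod p) \<longleftrightarrow> [z = 2] (mod p) \<or> [z = -2] (mod p)"
proof -
  have "z^2 - 4 = (z - 2) * (z + 2)"
    by (simp add: power2_eq_square algebra_simps)
  then show ?thesis
    using assms by (simp add: cong_iff_dvd_diff prime_dvd_mult_iff)
qed

lemma QuadRes_minus_one_if_discriminant_square:
  fixes m y z b :: int
  assumes "odd m" and "[z^2 = 4] (mod m)"
    and "[b^2 = (z^2 - 4) * y^2 - 4 * z^2] (mod m)"
  shows "QuadRes m (-1)"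
proof -
  have "[(z^2 - 4) * y^2 - 4 * z^2 = (4 - 4) * y^2 - 4 * 4] (mod m)"
    using assms(2) by (intro cong_diff cong_mult cong_refl cong_scalar_left)
  with assms(3) have "[b^2 = -16] (mod m)"
    using cong_trans by fastforce
  then have "[b^2 + 4^2 = 0] (mod m)"
    by (simp add: cong_iff_dvd_diff)
  then show ?thesis
    using QuadRes_minus_one_if_sum_squares_cong_0 coprime_4_if_odd[OF assms(1)] by blast
qed

lemma discriminant_square_if_QuadRes_minus_one:
  fixes m z :: int
  assumes "QuadRes m (-1)"
  shows "\<exists>y b. [b^2 = (z^2 - 4) * y^2 - 4 * z^2] (mod m)"
proof -
  obtain i where i: "[i^2 = -1] (mod m)"
    using assms unfolding QuadRes_def by blast
  have "(2 * i * z)^2 = 4 * z^2 * i^2"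
    by (simp add: power2_eq_square algebra_simps)
  also have "[\<dots> = 4 * z^2 * (-1)] (mod m)"
    using i by (rule cong_scalar_left)
  finally have "[(2 * i * z)^2 = (z^2 - 4) * 0^2 - 4 * z^2] (mod m)"
    by simp
  then show ?thesis
    by blast
qed

theorem lemma1:
  fixes p :: nat and z :: int
  assumes "prime p" and "p > 2"
  shows "(\<exists>x y :: int. [x^2 + y^2 + z^2 - x*y*z = 0] (mod int p)) \<longleftrightarrow>
         ((\<not> [z = 2] (mod int p) \<and> \<not> [z = -2] (mod int p)) \<or> QuadRes (int p) (-1))"
  (is "?L \<longleftrightarrow> ?R")
proof -
  define P where "P = int p"
  have prime: "prime P" and odd: "odd P"
    using assms prime_odd_nat[of p] unfolding P_def by auto
  have "?L \<longleftrightarrow> (\<exists>y b. [b^2 = (z^2 - 4) * y^2 - 4 * z^2] (mod P))"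
    using markov_cong_solvable_iff_square[OF odd] unfolding P_def by (metis ex_comm)
  also have "\<dots> \<longleftrightarrow> \<not> [z^2 = 4] (mod P) \<or> QuadRes P (-1)"
  proof
    assume "\<exists>y b. [b^2 = (z^2 - 4) * y^2 - 4 * z^2] (mod P)"
    then show "\<not> [z^2 = 4] (mod P) \<or> QuadRes P (-1)"
      using QuadRes_minus_one_if_discriminant_square[OF odd] by blast
  next
    assume "\<not> [z^2 = 4] (mod P) \<or> QuadRes P (-1)"
    then consider "\<not> P dvd z^2 - 4" | "QuadRes P (-1)"
      by (auto simp: cong_iff_dvd_diff)
    then show "\<exists>y b. [b^2 = (z^2 - 4) * y^2 - 4 * z^2] (mod P)"
    proof cases
      case 1
      then obtain y b where "[(z^2 - 4) * y^2 + (- 4 * z^2) = b^2] (mod P)"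
        using exists_cong_square_eq_quadratic[OF prime odd] by blast
      then show ?thesis
        by (auto dest: cong_sym)
    next
      case 2
      then show ?thesis
        by (rule discriminant_square_if_QuadRes_minus_one)
    qed
  qed
  also have "\<dots> \<longleftrightarrow> ?R"
    using prime_cong_square_4_iff[OF prime] unfolding P_def by blast
  finally show ?thesis .
qed

end
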